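(* $\int_{\mathbb{R}^d}\nabla W\cdot\nabla\mathcal Y_1\,dx\neq0$, where $\mathcal Y_1=\Re\mathcal Y_+$.
   Context: $d\ge5$. $W(x)=c_0(1+|x|^2)^{-\frac{d-2}{2}}$ with $c_0>0$ so that $-\Delta W=(|x|^{-4}*|W|^2)W$; $\widetilde W=\frac{d-2}{2}W+x\cdot\nabla W$; $(f,g)_{\dot H^1}=\Re\int\nabla f\cdot\overline{\nabla g}$. For real $f$: $L_+f=-\Delta f-(|x|^{-4}*W^2)f-2(|x|^{-4}*(Wf))W$, $L_-f=-\Delta f-(|x|^{-4}*W^2)f$; for $h=h_1+ih_2$, $\mathcal Lh=-L_-h_2+iL_+h_1$; $B(g,h)=\frac12\int(L_+g_1)h_1+\frac12\int(L_-g_2)h_2$, $\Phi(h)=B(h,h)$. Here $e_0>0$ and $\mathcal Y_\pm\in\mathcal S$ are the radial eigenfunctions of $\mathcal L$ with $\mathcal L\mathcal Y_\pm=\pm e_0\mathcal Y_\pm$, $\mathcal Y_+=\overline{\mathcal Y_-}$, for which there is $c>0$ with $\Phi(h)\ge c\|h\|^2_{\dot H^1}$ for all radial $h\in\dot H^1$ satisfying $(iW,h)_{\dot H^1}=(\widetilde W,h)_{\dot H^1}=B(\mathcal Y_\pm,h)=0$. *)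

theory Defs
  imports "HOL-Analysis.Analysis"
begin

text \<open>Functions on R^d are modelled on the type real^'n with d = CARD('n).\<close>

definition pdiff :: "'n::finite \<Rightarrow> (real^'n \<Rightarrow> 'b::real_normed_vector) \<Rightarrow> real^'n \<Rightarrow> 'b" where
  "pdiff i f x = vector_derivative (\<lambda>t::real. f (x + t *\<^sub>R axis i 1)) (at 0)"

fun pd_iter :: "'n::finite list \<Rightarrow> (real^'n \<Rightarrow> 'b::real_normed_vector) \<Rightarrow> real^'n \<Rightarrow> 'b" where
  "pd_iter [] f = f"
| "pd_iter (i # is) f = pdiff i (pd_iter is f)"

definition schwartz :: "(real^'n::finite \<Rightarrow> 'b::real_normed_vector) \<Rightarrow> bool" where
  "schwartz f \<longleftrightarrow>
     (\<forall>is. continuous_on UNIV (pd_iter is f) \<and>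
           (\<forall>i x. (\<lambda>t::real. pd_iter is f (x + t *\<^sub>R axis i 1)) differentiable (at 0)) \<and>
           (\<forall>N::nat. bounded (range (\<lambda>x. ((1 + norm x) ^ N) *\<^sub>R pd_iter is f x))))"

definition radial :: "(real^'n::finite \<Rightarrow> 'b) \<Rightarrow> bool" where
  "radial f \<longleftrightarrow> (\<forall>x y. norm x = norm y \<longrightarrow> f x = f y)"

definition lap :: "(real^'n::finite \<Rightarrow> 'b::real_normed_vector) \<Rightarrow> real^'n \<Rightarrow> 'b" where
  "lap f x = (\<Sum>i\<in>UNIV. pdiff i (pdiff i f) x)"

definition conv4 :: "(real^'n::finite \<Rightarrow> real) \<Rightarrow> real^'n \<Rightarrow> real" where
  "conv4 g x = (\<integral>y. g y / norm (x - y) ^ 4 \<partial>lborel)"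

definition Lplus :: "(real^'n::finite \<Rightarrow> real) \<Rightarrow> (real^'n \<Rightarrow> real) \<Rightarrow> real^'n \<Rightarrow> real" where
  "Lplus W f x = - lap f x - conv4 (\<lambda>y. W y ^ 2) x * f x
                 - 2 * conv4 (\<lambda>y. W y * f y) x * W x"

definition Lminus :: "(real^'n::finite \<Rightarrow> real) \<Rightarrow> (real^'n \<Rightarrow> real) \<Rightarrow> real^'n \<Rightarrow> real" where
  "Lminus W f x = - lap f x - conv4 (\<lambda>y. W y ^ 2) x * f x"

definition Lop :: "(real^'n::finite \<Rightarrow> real) \<Rightarrow> (real^'n \<Rightarrow> complex) \<Rightarrow> real^'n \<Rightarrow> complex" where
  "Lop W h x = Complex (- Lminus W (\<lambda>y. Im (h y)) x) (Lplus W (\<lambda>y. Re (h y)) x)"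

definition Bform :: "(real^'n::finite \<Rightarrow> real) \<Rightarrow> (real^'n \<Rightarrow> complex) \<Rightarrow> (real^'n \<Rightarrow> complex) \<Rightarrow> real" where
  "Bform W g h = (1/2) * (\<integral>x. Lplus W (\<lambda>y. Re (g y)) x * Re (h x) \<partial>lborel)
               + (1/2) * (\<integral>x. Lminus W (\<lambda>y. Im (g y)) x * Im (h x) \<partial>lborel)"

text \<open>Phi(h) = B(h,h), written in its (integrated by parts) energy form,
  which is the meaning of B(h,h) for h in the energy space.\<close>
definition Phi :: "(real^'n::finite \<Rightarrow> real) \<Rightarrow> (real^'n \<Rightarrow> complex) \<Rightarrow> real" where
  "Phi W h = (let h1 = (\<lambda>y. Re (h y)); h2 = (\<lambda>y. Im (h y)) in
      (1/2) * ((\<Sum>i\<in>UNIV. \<integral>x. (pdiff i h1 x)\<^sup>2 \<partial>lborel)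
               - (\<integral>x. conv4 (\<lambda>y. W y ^ 2) x * (h1 x)\<^sup>2 \<partial>lborel)
               - 2 * (\<integral>x. conv4 (\<lambda>y. W y * h1 y) x * W x * h1 x \<partial>lborel))
    + (1/2) * ((\<Sum>i\<in>UNIV. \<integral>x. (pdiff i h2 x)\<^sup>2 \<partial>lborel)
               - (\<integral>x. conv4 (\<lambda>y. W y ^ 2) x * (h2 x)\<^sup>2 \<partial>lborel)))"

definition hdot_inner :: "(real^'n::finite \<Rightarrow> complex) \<Rightarrow> (real^'n \<Rightarrow> complex) \<Rightarrow> real" where
  "hdot_inner f g = Re (\<Sum>i\<in>UNIV. \<integral>x. pdiff i f x * cnj (pdiff i g x) \<partial>lborel)"

definition hdot_norm2 :: "(real^'n::finite \<Rightarrow> complex) \<Rightarrow> real" where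
  "hdot_norm2 h = (\<Sum>i\<in>UNIV. \<integral>x. (cmod (pdiff i h x))\<^sup>2 \<partial>lborel)"

text \<open>(Classical representatives of) elements of H1dot(R^d), d >= 3:
  C^1 functions in L^(2d/(d-2)) with square integrable gradient.\<close>
definition in_Hdot1 :: "(real^'n::finite \<Rightarrow> complex) \<Rightarrow> bool" where
  "in_Hdot1 h \<longleftrightarrow>
     (\<forall>i x. (\<lambda>t::real. h (x + t *\<^sub>R axis i 1)) differentiable (at 0)) \<and>
     (\<forall>i. continuous_on UNIV (pdiff i h)) \<and>
     integrable lborel (\<lambda>x. cmod (h x) powr (2 * real CARD('n) / (real CARD('n) - 2))) \<and>
     (\<forall>i. integrable lborel (\<lambda>x. (cmod (pdiff i h x))\<^sup>2))"

end

theory Submission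
  imports Defs "HOL-Real_Asymp.Real_Asymp"
begin

text \<open>If \<open>\<integral> \<nabla>W \<cdot> \<nabla>Y\<^sub>1 = 0\<close>, then \<open>h = W\<close> itself satisfies all the orthogonality conditions
  of the coercivity estimate: \<open>(iW, W) = 0\<close> because \<open>W\<close> is real; \<open>(W\<^sub>1, W) = 0\<close> for the scaling
  generator \<open>W\<^sub>1 = (d - 2)/2 W + x \<cdot> \<nabla>W\<close> because the Dirichlet energy is invariant under
  \<open>W \<mapsto> \<lambda>\<^bsup>(d-2)/2\<^esup> W(\<lambda>x)\<close>; and \<open>B(Y\<^sub>\<plusminus>, W) = - \<integral> \<nabla>W \<cdot> \<nabla>Y\<^sub>1 = 0\<close> after integrating by
  parts, exchanging the Hartree term by Fubini and using \<open>-\<Delta>W = (|x|\<^sup>-\<^sup>4 * W\<^sup>2) W\<close>.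
  The same equation gives \<open>\<Phi>(W) = \<parallel>\<nabla>W\<parallel>\<^sup>2 / 2 - 3/2 \<integral> (|x|\<^sup>-\<^sup>4 * W\<^sup>2) W\<^sup>2 = - \<parallel>\<nabla>W\<parallel>\<^sup>2 < 0\<close>,
  contradicting coercivity. All integrals are controlled by the weights \<open>bracket q x = (1 + |x|\<^sup>2)\<^bsup>q\<^esup>\<close>,
  which are integrable for \<open>q < -d/2\<close>; \<open>W\<close> is \<open>c\<^sub>0\<close> times the weight with \<open>q = -(d - 2)/2\<close>.\<close>

section \<open>Polynomial weights\<close>

definition bracket :: "real \<Rightarrow> real^'n::finite \<Rightarrow> real" where
  "bracket q x = (1 + (norm x)\<^sup>2) powr q"

lemma one_plus_norm_square_pos: "0 < 1 + (norm x)\<^sup>2"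
  by (simp add: add_pos_nonneg)

lemma bracket_pos: "0 < bracket q x"
  unfolding bracket_def using one_plus_norm_square_pos[of x] by simp

lemma bracket_mult: "bracket a x * bracket b x = bracket (a + b) x"
  unfolding bracket_def by (simp add: powr_add)

lemma bracket_succ: "bracket (q + 1) x = (1 + (norm x)\<^sup>2) * bracket q x"
  unfolding bracket_def using one_plus_norm_square_pos[of x] by (simp add: powr_add mult.commute)

lemma bracket_mono: "a \<le> b \<Longrightarrow> bracket a x \<le> bracket b x"
  unfolding bracket_def by (rule powr_mono) simp_all

lemma bracket_0 [simp]: "bracket 0 x = 1"
  unfolding bracket_def using one_plus_norm_square_pos[of x] by simp

lemma continuous_on_bracket [continuous_intros]: "continuous_on A (bracket q)"
  unfolding bracket_def
  by (intro continuous_intros) (metis one_plus_norm_square_pos less_irrefl)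

lemma borel_measurable_bracket [measurable]: "bracket q \<in> borel_measurable borel"
  by (intro borel_measurable_continuous_onI continuous_on_bracket)

lemma abs_component_le_bracket: "\<bar>x $ i\<bar> \<le> bracket (1/2) x"
proof -
  have "\<bar>x $ i\<bar> \<le> norm x" by (rule component_le_norm_cart)
  also have "norm x \<le> sqrt (1 + (norm x)\<^sup>2)" by (rule real_le_rsqrt) simp
  finally show ?thesis unfolding bracket_def by (simp add: powr_half_sqrt add_nonneg_nonneg)
qed

lemma bracket_le_of_dist_le_1:
  assumes "dist x y \<le> 1" and "q \<le> 0"
  shows "bracket q x \<le> 3 powr (-q) * bracket q y"
proof -
  have "norm y \<le> norm x + 1"
    using norm_triangle_ineq2[of y x] assms(1) by (simp add: dist_norm norm_minus_commute)
  then have "(norm y)\<^sup>2 \<le> (norm x + 1)\<^sup>2" by (simp add: power_mono)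
  also have "\<dots> \<le> 2 * (norm x)\<^sup>2 + 2"
    using zero_le_square[of "norm x - 1"] by (simp add: power2_eq_square algebra_simps)
  finally have "1 + (norm y)\<^sup>2 \<le> 3 + 3 * (norm x)\<^sup>2"
    using zero_le_power2[of "norm x"] by linarith
  then have le: "(1 + (norm y)\<^sup>2) / 3 \<le> 1 + (norm x)\<^sup>2" by simp
  have "bracket q x \<le> ((1 + (norm y)\<^sup>2) / 3) powr q"
    unfolding bracket_def by (rule powr_mono2'[OF assms(2) _ le]) (simp add: add_pos_nonneg)
  also have "\<dots> = 3 powr (-q) * bracket q y" unfolding bracket_def
    by (subst powr_divide) (simp_all add: powr_minus divide_inverse mult_ac)
  finally show ?thesis .
qed

lemma nn_integral_one_plus_abs_powr_finite:
  fixes b :: real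
  assumes "b < -1"
  shows "(\<integral>\<^sup>+t. ennreal ((1 + \<bar>t\<bar>) powr b) \<partial>lborel) < \<infinity>"
proof -
  define h where "h t = ennreal ((1 + t) powr b) * indicator {0..} t" for t :: real
  have [measurable]: "h \<in> borel_measurable borel" unfolding h_def by measurable
  have half_line: "(\<integral>\<^sup>+t. h t \<partial>lborel) = ennreal (0 - (1 + 0) powr (b + 1) / (b + 1))"
    unfolding h_def
  proof (rule nn_integral_FTC_atLeast)
    show "((\<lambda>t::real. (1 + t) powr (b + 1) / (b + 1)) \<longlongrightarrow> 0) at_top"
      using assms by real_asymp
  qed (use assms in \<open>auto intro!: derivative_eq_intros\<close>)
  have "(\<integral>\<^sup>+t. ennreal ((1 + \<bar>t\<bar>) powr b) \<partial>lborel) \<le> (\<integral>\<^sup>+t. h t + h (0 + (-1) * t) \<partial>lborel)"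
    by (rule nn_integral_mono) (auto simp: h_def indicator_def)
  also have "\<dots> = (\<integral>\<^sup>+t. h t \<partial>lborel) + (\<integral>\<^sup>+t. h (0 + (-1) * t) \<partial>lborel)"
    by (rule nn_integral_add) auto
  also have "(\<integral>\<^sup>+t. h (0 + (-1) * t) \<partial>lborel) = (\<integral>\<^sup>+t. h t \<partial>lborel)"
    using nn_integral_real_affine[of h "-1" 0] by simp
  finally show ?thesis by (rule order.strict_trans1) (simp add: half_line)
qed

text \<open>Since \<open>1 + |x|\<^sup>2 \<ge> (1 + |x \<bullet> b|)\<^sup>2 / 2\<close> for every basis vector \<open>b\<close>, the weight
  factorises into one-dimensional weights, which are integrable when \<open>2 q / d < -1\<close>.\<close>

lemma bracket_le_prod:
  fixes x :: "real^'n::finite"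
  assumes "q \<le> 0"
  shows "bracket q x \<le> 2 powr (-q) * (\<Prod>b\<in>Basis. (1 + \<bar>x \<bullet> b\<bar>) powr (2 * q / CARD('n)))"
proof -
  let ?d = "real CARD('n)"
  have factor: "(2 * (1 + (norm x)\<^sup>2)) powr (q / ?d) \<le> (1 + \<bar>x \<bullet> b\<bar>) powr (2 * q / ?d)"
    if "b \<in> Basis" for b
  proof -
    let ?a = "\<bar>x \<bullet> b\<bar>"
    have "?a\<^sup>2 \<le> (norm x)\<^sup>2" using power_mono[OF Basis_le_norm[OF that] abs_ge_zero, where n=2] by simp
    then have le: "(1 + ?a)\<^sup>2 \<le> 2 * (1 + (norm x)\<^sup>2)"
      using zero_le_square[of "1 - ?a"] by (simp add: power2_eq_square algebra_simps)
    have sq: "(1 + ?a) powr 2 = (1 + ?a)\<^sup>2" by (rule powr_numeral) simp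
    have "(1 + ?a) powr (2 * q / ?d) = ((1 + ?a)\<^sup>2) powr (q / ?d)"
      unfolding sq[symmetric] powr_powr by simp
    also have "\<dots> \<ge> (2 * (1 + (norm x)\<^sup>2)) powr (q / ?d)"
      by (rule powr_mono2'[OF _ _ le]) (use assms in \<open>auto simp: divide_nonpos_pos\<close>)
    finally show ?thesis .
  qed
  have "2 powr q * bracket q x = (2 * (1 + (norm x)\<^sup>2)) powr q"
    unfolding bracket_def by (rule powr_mult[symmetric])
  also have "\<dots> = (\<Prod>b\<in>(Basis :: (real^'n) set). (2 * (1 + (norm x)\<^sup>2)) powr (q / ?d))"
    using powr_power[of "2 * (1 + (norm x)\<^sup>2)" "q / ?d" "CARD('n)"] one_plus_norm_square_pos[of x]
    by simp
  also have "\<dots> \<le> (\<Prod>b\<in>Basis. (1 + \<bar>x \<bullet> b\<bar>) powr (2 * q / ?d))"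
    by (intro prod_mono conjI powr_ge_zero factor)
  finally show ?thesis by (simp add: powr_minus field_simps)
qed

lemma integrable_bracket:
  assumes "q < - real CARD('n) / 2"
  shows "integrable lborel (bracket q :: real^'n::finite \<Rightarrow> real)"
proof (rule integrableI_bounded)
  let ?d = "real CARD('n)"
  let ?w = "\<lambda>t::real. ennreal ((1 + \<bar>t\<bar>) powr (2 * q / ?d))"
  have "- ?d / 2 \<le> 0" by simp
  then have q: "q \<le> 0" using assms by linarith
  have "(\<integral>\<^sup>+x. ennreal (norm (bracket q x)) \<partial>(lborel :: (real^'n) measure))
      \<le> (\<integral>\<^sup>+x. ennreal (2 powr (-q)) * (\<Prod>b\<in>Basis. ?w (x \<bullet> b)) \<partial>(lborel :: (real^'n) measure))"
  proof (rule nn_integral_mono)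
    fix x :: "real^'n"
    have "norm (bracket q x) \<le> 2 powr (-q) * (\<Prod>b\<in>Basis. (1 + \<bar>x \<bullet> b\<bar>) powr (2 * q / ?d))"
      using bracket_le_prod[OF q] bracket_pos[of q x] by simp
    then show "ennreal (norm (bracket q x)) \<le> ennreal (2 powr (-q)) * (\<Prod>b\<in>Basis. ?w (x \<bullet> b))"
      by (simp add: prod_ennreal ennreal_mult[symmetric] prod_nonneg ennreal_leI)
  qed
  also have "\<dots> = ennreal (2 powr (-q)) * (\<integral>\<^sup>+x. (\<Prod>b\<in>Basis. ?w (x \<bullet> b)) \<partial>(lborel :: (real^'n) measure))"
    by (rule nn_integral_cmult) measurable
  also have "(\<integral>\<^sup>+x. (\<Prod>b\<in>Basis. ?w (x \<bullet> b)) \<partial>(lborel :: (real^'n) measure))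
      = (\<Prod>b\<in>(Basis :: (real^'n) set). \<integral>\<^sup>+t. ?w t \<partial>lborel)"
    by (rule nn_integral_lborel_prod) auto
  also have "ennreal (2 powr (-q)) * \<dots> < \<infinity>"
  proof -
    have "2 * q / ?d < -1" using assms by (simp add: field_simps)
    then show ?thesis using nn_integral_one_plus_abs_powr_finite[of "2 * q / ?d"]
      by (simp add: less_top[symmetric] ennreal_mult_eq_top_iff power_eq_top_ennreal)
  qed
  finally show "(\<integral>\<^sup>+x. ennreal (norm (bracket q x)) \<partial>(lborel :: (real^'n) measure)) < \<infinity>" .
qed simp

definition bracket_bounded :: "real \<Rightarrow> (real^'n::finite \<Rightarrow> real) \<Rightarrow> bool" where
  "bracket_bounded q f \<longleftrightarrow> (\<exists>C. \<forall>x. \<bar>f x\<bar> \<le> C * bracket q x)"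

lemma bracket_boundedI: "(\<And>x. \<bar>f x\<bar> \<le> C * bracket q x) \<Longrightarrow> bracket_bounded q f"
  unfolding bracket_bounded_def by blast

lemma bracket_boundedD:
  fixes f :: "real^'n::finite \<Rightarrow> real"
  assumes "bracket_bounded q f"
  shows "\<exists>C\<ge>0. \<forall>x. \<bar>f x\<bar> \<le> C * bracket q x"
proof -
  obtain C where C: "\<And>x. \<bar>f x\<bar> \<le> C * bracket q x"
    using assms unfolding bracket_bounded_def by blast
  have "0 \<le> C * bracket q x" for x :: "real^'n" using order_trans[OF abs_ge_zero C] .
  from this[of 0] have "C \<ge> 0" using bracket_pos[of q "0 :: real^'n"] by (simp add: zero_le_mult_iff)
  with C show ?thesis by blast
qed

lemma bracket_bounded_bracket: "bracket_bounded q (bracket q)"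
  by (rule bracket_boundedI[of _ 1]) (simp add: less_imp_le[OF bracket_pos])

lemma bracket_bounded_component: "bracket_bounded (1/2) (\<lambda>x. x $ i)"
  by (rule bracket_boundedI[of _ 1]) (simp add: abs_component_le_bracket)

lemma bracket_bounded_mono:
  assumes "bracket_bounded a f" and "a \<le> b"
  shows "bracket_bounded b f"
proof -
  obtain C where "C \<ge> 0" and "\<And>x. \<bar>f x\<bar> \<le> C * bracket a x"
    using bracket_boundedD[OF assms(1)] by blast
  then show ?thesis
    by (intro bracket_boundedI[of _ C]) (meson bracket_mono[OF assms(2)] mult_left_mono order_trans)
qed

lemma bracket_bounded_mult:
  assumes "bracket_bounded a f" and "bracket_bounded b g"
  shows "bracket_bounded (a + b) (\<lambda>x. f x * g x)"
proof -
  obtain C where C: "C \<ge> 0" "\<And>x. \<bar>f x\<bar> \<le> C * bracket a x"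
    using bracket_boundedD[OF assms(1)] by blast
  obtain D where D: "D \<ge> 0" "\<And>x. \<bar>g x\<bar> \<le> D * bracket b x"
    using bracket_boundedD[OF assms(2)] by blast
  have "\<bar>f x * g x\<bar> \<le> (C * D) * bracket (a + b) x" for x
  proof -
    have "\<bar>f x * g x\<bar> \<le> (C * bracket a x) * (D * bracket b x)"
      unfolding abs_mult by (intro mult_mono C D) (use C bracket_pos[of a x] in auto)
    then show ?thesis by (simp add: bracket_mult[symmetric] mult_ac)
  qed
  then show ?thesis by (rule bracket_boundedI)
qed

lemma bracket_bounded_cmult:
  assumes "bracket_bounded q f"
  shows "bracket_bounded q (\<lambda>x. c * f x)"
proof -
  obtain C where "C \<ge> 0" "\<And>x. \<bar>f x\<bar> \<le> C * bracket q x" using bracket_boundedD[OF assms] by blast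
  then have "\<bar>c * f x\<bar> \<le> (\<bar>c\<bar> * C) * bracket q x" for x
    unfolding abs_mult mult.assoc by (intro mult_left_mono) auto
  then show ?thesis by (rule bracket_boundedI)
qed

lemma bracket_bounded_add:
  fixes f g :: "real^'n::finite \<Rightarrow> real"
  assumes "bracket_bounded q f" and "bracket_bounded q g"
  shows "bracket_bounded q (\<lambda>x. f x + g x)"
proof -
  obtain C where "C \<ge> 0" and C: "\<And>x. \<bar>f x\<bar> \<le> C * bracket q x"
    using bracket_boundedD[OF assms(1)] by blast
  obtain D where "D \<ge> 0" and D: "\<And>x. \<bar>g x\<bar> \<le> D * bracket q x"
    using bracket_boundedD[OF assms(2)] by blast
  have "\<bar>f x + g x\<bar> \<le> (C + D) * bracket q x" for x
    using abs_triangle_ineq[of "f x" "g x"] add_mono[OF C D, of x x] by (simp add: distrib_right)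
  then show ?thesis by (rule bracket_boundedI)
qed

lemma bracket_bounded_diff:
  assumes "bracket_bounded q f" and "bracket_bounded q g"
  shows "bracket_bounded q (\<lambda>x. f x - g x)"
proof -
  have "bracket_bounded q (\<lambda>x. f x + (-1) * g x)"
    by (intro bracket_bounded_add bracket_bounded_cmult assms)
  then show ?thesis by simp
qed

lemma integrable_bracket_bounded:
  fixes f :: "real^'n::finite \<Rightarrow> real"
  assumes "continuous_on UNIV f" and "bracket_bounded q f" and "q < - real CARD('n) / 2"
  shows "integrable lborel f"
proof -
  obtain C where C: "\<And>x. \<bar>f x\<bar> \<le> C * bracket q x"
    using bracket_boundedD[OF assms(2)] by blast
  show ?thesis
  proof (rule Bochner_Integration.integrable_bound)
    show "integrable lborel (\<lambda>x::real^'n. C * bracket q x)"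
      using integrable_bracket[OF assms(3)] by simp
    show "f \<in> borel_measurable lborel"
      using borel_measurable_continuous_onI[OF assms(1)] by simp
    show "AE x in lborel. norm (f x) \<le> norm (C * bracket q x)"
      using C by (auto intro: order_trans[OF _ abs_ge_self])
  qed
qed

section \<open>Partial derivatives and integration by parts\<close>

definition has_pderiv :: "'n::finite \<Rightarrow> (real^'n \<Rightarrow> real) \<Rightarrow> (real^'n \<Rightarrow> real) \<Rightarrow> bool" where
  "has_pderiv i f f' \<longleftrightarrow> (\<forall>x. ((\<lambda>t. f (x + t *\<^sub>R axis i 1)) has_real_derivative f' x) (at 0))"

lemma has_pderiv_imp_pdiff_eq:
  assumes "has_pderiv i f f'"
  shows "pdiff i f = f'"
proof
  fix x
  show "pdiff i f x = f' x"
    using assms unfolding has_pderiv_def pdiff_def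
    by (metis has_real_derivative_iff_has_vector_derivative vector_derivative_at)
qed

lemma has_pderiv_at:
  assumes "has_pderiv i f f'"
  shows "((\<lambda>t. f (x + t *\<^sub>R axis i 1)) has_real_derivative f' (x + s *\<^sub>R axis i 1)) (at s)"
proof -
  let ?e = "axis i (1::real)" and ?y = "x + s *\<^sub>R axis i 1"
  have "((\<lambda>u. f (?y + u *\<^sub>R ?e)) has_real_derivative f' ?y) (at (s + -s))"
    using assms unfolding has_pderiv_def by simp
  then have "((\<lambda>t. f (?y + (t + -s) *\<^sub>R ?e)) has_real_derivative f' ?y) (at s)"
    using DERIV_shift[of "\<lambda>u. f (?y + u *\<^sub>R ?e)"] by blast
  then show ?thesis by (simp add: algebra_simps)
qed

lemma has_pderiv_diff:
  "has_pderiv i f f' \<Longrightarrow> has_pderiv i g g' \<Longrightarrow> has_pderiv i (\<lambda>x. f x - g x) (\<lambda>x. f' x - g' x)"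
  unfolding has_pderiv_def by (auto intro!: derivative_eq_intros)

lemma has_pderiv_mult:
  "has_pderiv i f f' \<Longrightarrow> has_pderiv i g g' \<Longrightarrow> has_pderiv i (\<lambda>x. f x * g x) (\<lambda>x. f' x * g x + f x * g' x)"
  unfolding has_pderiv_def by (auto intro!: derivative_eq_intros)

lemma has_pderiv_cmult: "has_pderiv i f f' \<Longrightarrow> has_pderiv i (\<lambda>x. c * f x) (\<lambda>x. c * f' x)"
  unfolding has_pderiv_def by (auto intro!: derivative_eq_intros)

lemma has_pderiv_component: "has_pderiv i (\<lambda>x. x $ i) (\<lambda>x. 1)"
  unfolding has_pderiv_def by (auto intro!: derivative_eq_intros)

lemma has_pderiv_cong: "has_pderiv i f f' \<Longrightarrow> f = g \<Longrightarrow> (\<And>x. f' x = g' x) \<Longrightarrow> has_pderiv i g g'"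
  unfolding has_pderiv_def by simp

lemma integral_translate_diff_eq_0:
  fixes f :: "'a::euclidean_space \<Rightarrow> real"
  assumes [measurable]: "f \<in> borel_measurable borel" and "integrable lborel f"
  shows "integral\<^sup>L lborel (\<lambda>x. f (v + x) - f x) = 0"
proof -
  have translate: "distr lborel borel ((+) v) = (lborel :: 'a measure)"
    by (rule lborel_distr_plus)
  have "integrable lborel (\<lambda>x. f (v + x))"
    using assms(2) by (subst (asm) translate[symmetric]) (simp add: integrable_distr_eq)
  moreover have "integral\<^sup>L lborel (\<lambda>x. f (v + x)) = integral\<^sup>L lborel f"
    by (subst (2) translate[symmetric]) (simp add: integral_distr)
  ultimately show ?thesis
    using assms(2) by (simp add: Bochner_Integration.integral_diff)
qed

text \<open>The difference quotients of \<open>f\<close> in direction \<open>i\<close> have integral \<open>0\<close> by translation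
  invariance of Lebesgue measure; by the mean value theorem they are dominated by a translate of
  the weight bounding \<open>f'\<close>, so dominated convergence passes to the limit.\<close>

lemma integral_pderiv_eq_0:
  fixes f f' :: "real^'n::finite \<Rightarrow> real"
  assumes f: "has_pderiv i f f'" and "continuous_on UNIV f" "continuous_on UNIV f'"
    and "integrable lborel f" and "bracket_bounded q f'" and q: "q < - real CARD('n) / 2"
  shows "integral\<^sup>L lborel f' = 0"
proof -
  let ?e = "axis i (1::real)"
  define t where "t n = inverse (real (Suc n))" for n
  define s where "s n x = (f (t n *\<^sub>R ?e + x) - f x) / t n" for n x
  have t: "0 < t n" "t n \<le> 1" for n unfolding t_def by (simp_all add: field_simps)
  have "- real CARD('n) / 2 \<le> 0" by simp
  then have "q \<le> 0" using q by linarith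
  obtain C where "C \<ge> 0" and C: "\<And>x. \<bar>f' x\<bar> \<le> C * bracket q x"
    using bracket_boundedD[OF assms(5)] by blast
  have [measurable]: "f \<in> borel_measurable borel" "f' \<in> borel_measurable borel"
    using assms(2,3) by (simp_all add: borel_measurable_continuous_onI)
  have [measurable]: "s n \<in> borel_measurable borel" for n unfolding s_def by measurable
  have integral_s: "integral\<^sup>L lborel (s n) = 0" for n
    unfolding s_def using integral_translate_diff_eq_0[OF _ assms(4)] by simp
  have "(\<lambda>n. s n x) \<longlonglongrightarrow> f' x" for x
  proof -
    have "((\<lambda>u. f (x + u *\<^sub>R ?e)) has_real_derivative f' x) (at 0)"
      using f unfolding has_pderiv_def by blast
    then have "((\<lambda>h. (f (h *\<^sub>R ?e + x) - f x) / h) \<longlongrightarrow> f' x) (at 0)"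
      unfolding DERIV_def by (simp add: add.commute)
    moreover have "filterlim t (at 0) sequentially"
      unfolding filterlim_at t_def using LIMSEQ_inverse_real_of_nat by (auto simp del: of_nat_Suc)
    ultimately show ?thesis
      unfolding s_def by (rule filterlim_compose[unfolded comp_def])
  qed
  moreover have "\<bar>s n x\<bar> \<le> C * 3 powr (-q) * bracket q x" for n x
  proof -
    obtain z where z: "0 < z" "z < t n"
      and mvt: "f (x + t n *\<^sub>R ?e) - f (x + 0 *\<^sub>R ?e) = (t n - 0) * f' (x + z *\<^sub>R ?e)"
      using MVT2[OF t(1) has_pderiv_at[OF f]] by blast
    have "s n x = f' (x + z *\<^sub>R ?e)"
      unfolding s_def using mvt t(1)[of n] by (simp add: add.commute)
    also have "\<bar>\<dots>\<bar> \<le> C * bracket q (x + z *\<^sub>R ?e)" by (rule C)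
    also have "\<dots> \<le> C * (3 powr (-q) * bracket q x)"
      using z t(2)[of n] \<open>q \<le> 0\<close> \<open>C \<ge> 0\<close>
      by (intro mult_left_mono bracket_le_of_dist_le_1) (auto simp: dist_norm)
    finally show ?thesis by (simp add: mult.assoc)
  qed
  then have "(\<lambda>n. integral\<^sup>L lborel (s n)) \<longlonglongrightarrow> integral\<^sup>L lborel f'"
    using calculation integrable_bracket[OF q]
    by (intro integral_dominated_convergence[where w="\<lambda>x. C * 3 powr (-q) * bracket q x"]) auto
  then show ?thesis
    unfolding integral_s by (simp add: LIMSEQ_const_iff)
qed

lemma integral_pderiv_component_mult_eq_0:
  fixes g g' :: "real^'n::finite \<Rightarrow> real"
  assumes g: "has_pderiv i g g'" and cont: "continuous_on UNIV g" "continuous_on UNIV g'"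
    and bd: "bracket_bounded q g" "bracket_bounded (q - 1/2) g'"
    and q: "q + 1/2 < - real CARD('n) / 2"
  shows "integrable lborel (\<lambda>x. g x + x $ i * g' x)"
    and "integral\<^sup>L lborel (\<lambda>x. g x + x $ i * g' x) = 0"
proof -
  have "bracket_bounded q (\<lambda>x. x $ i * g' x)"
    using bracket_bounded_mult[OF bracket_bounded_component bd(2)] by simp
  then have bd': "bracket_bounded q (\<lambda>x. g x + x $ i * g' x)"
    by (rule bracket_bounded_add[OF bd(1)])
  have cont': "continuous_on UNIV (\<lambda>x. g x + x $ i * g' x)"
    by (intro continuous_intros cont)
  have deriv: "has_pderiv i (\<lambda>x. x $ i * g x) (\<lambda>x. g x + x $ i * g' x)"
    using has_pderiv_mult[OF has_pderiv_component g] by simp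
  have int: "integrable lborel (\<lambda>x. x $ i * g x)"
    by (rule integrable_bracket_bounded[OF _ bracket_bounded_mult[OF bracket_bounded_component bd(1)]])
      (intro continuous_intros cont, use q in simp)
  have q': "q < - real CARD('n) / 2" using q by simp
  show "integral\<^sup>L lborel (\<lambda>x. g x + x $ i * g' x) = 0"
    by (rule integral_pderiv_eq_0[OF deriv _ cont' int bd' q']) (intro continuous_intros cont)
  show "integrable lborel (\<lambda>x. g x + x $ i * g' x)"
    by (rule integrable_bracket_bounded[OF cont' bd']) (use q in simp)
qed

lemma integral_pderiv_mult_swap:
  fixes f g :: "real^'n::finite \<Rightarrow> real"
  assumes f: "has_pderiv i f f'" and g: "has_pderiv i g g'"
    and cont: "continuous_on UNIV f" "continuous_on UNIV f'" "continuous_on UNIV g" "continuous_on UNIV g'"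
    and bd: "bracket_bounded a f" "bracket_bounded a' f'" "bracket_bounded b g" "bracket_bounded b' g'"
    and exps: "a + b < - real CARD('n) / 2" "a' + b < - real CARD('n) / 2" "a + b' < - real CARD('n) / 2"
  shows "integrable lborel (\<lambda>x. f' x * g x)" and "integrable lborel (\<lambda>x. f x * g' x)"
    and "integral\<^sup>L lborel (\<lambda>x. f' x * g x) = - integral\<^sup>L lborel (\<lambda>x. f x * g' x)"
proof -
  let ?q = "max (a' + b) (a + b')"
  have bd': "bracket_bounded ?q (\<lambda>x. f' x * g x)" "bracket_bounded ?q (\<lambda>x. f x * g' x)"
    by (rule bracket_bounded_mono[OF bracket_bounded_mult[OF bd(2,3)]], simp)
      (rule bracket_bounded_mono[OF bracket_bounded_mult[OF bd(1,4)]], simp)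
  have q: "?q < - real CARD('n) / 2" using exps by simp
  show int1: "integrable lborel (\<lambda>x. f' x * g x)" and int2: "integrable lborel (\<lambda>x. f x * g' x)"
    by (rule integrable_bracket_bounded[OF _ _ q]; (intro continuous_intros cont)?; rule bd')+
  have "integral\<^sup>L lborel (\<lambda>x. f' x * g x + f x * g' x) = 0"
  proof (rule integral_pderiv_eq_0[OF has_pderiv_mult[OF f g] _ _ _ _ q])
    show "integrable lborel (\<lambda>x. f x * g x)"
      by (rule integrable_bracket_bounded[OF _ bracket_bounded_mult[OF bd(1,3)] exps(1)])
        (intro continuous_intros cont)
    show "bracket_bounded ?q (\<lambda>x. f' x * g x + f x * g' x)"
      by (rule bracket_bounded_add[OF bd'])
  qed (intro continuous_intros cont)+
  then show "integral\<^sup>L lborel (\<lambda>x. f' x * g x) = - integral\<^sup>L lborel (\<lambda>x. f x * g' x)"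
    using Bochner_Integration.integral_add[OF int1 int2] by simp
qed

lemma lap_eq_sum:
  assumes "\<And>i. has_pderiv i f (f1 i)" and "\<And>i. has_pderiv i (f1 i) (f2 i)"
  shows "lap f x = (\<Sum>i\<in>UNIV. f2 i x)"
  unfolding lap_def has_pderiv_imp_pdiff_eq[OF assms(1)] has_pderiv_imp_pdiff_eq[OF assms(2)] ..

lemma integral_lap_mult:
  fixes f g :: "real^'n::finite \<Rightarrow> real"
  assumes f1: "\<And>i. has_pderiv i f (f1 i)" and f2: "\<And>i. has_pderiv i (f1 i) (f2 i)"
    and g1: "\<And>i. has_pderiv i g (g1 i)"
    and cont: "\<And>i. continuous_on UNIV (f1 i)" "\<And>i. continuous_on UNIV (f2 i)"
      "continuous_on UNIV g" "\<And>i. continuous_on UNIV (g1 i)"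
    and bd: "\<And>i. bracket_bounded a (f1 i)" "\<And>i. bracket_bounded a' (f2 i)"
      "bracket_bounded b g" "\<And>i. bracket_bounded b' (g1 i)"
    and exps: "a + b < - real CARD('n) / 2" "a' + b < - real CARD('n) / 2"
      "a + b' < - real CARD('n) / 2"
  shows "integrable lborel (\<lambda>x. lap f x * g x)"
    and "\<And>i. integrable lborel (\<lambda>x. f1 i x * g1 i x)"
    and "integral\<^sup>L lborel (\<lambda>x. lap f x * g x) = - (\<Sum>i\<in>UNIV. integral\<^sup>L lborel (\<lambda>x. f1 i x * g1 i x))"
proof -
  note swap = integral_pderiv_mult_swap[OF f2 g1 cont(1,2,3,4) bd(1,2,3,4) exps]
  have lap: "(\<lambda>x. lap f x * g x) = (\<lambda>x. \<Sum>i\<in>UNIV. f2 i x * g x)"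
    by (simp add: lap_eq_sum[OF f1 f2] sum_distrib_right)
  show "integrable lborel (\<lambda>x. lap f x * g x)"
    unfolding lap by (intro Bochner_Integration.integrable_sum swap(1))
  show "\<And>i. integrable lborel (\<lambda>x. f1 i x * g1 i x)" by (rule swap(2))
  show "integral\<^sup>L lborel (\<lambda>x. lap f x * g x) = - (\<Sum>i\<in>UNIV. integral\<^sup>L lborel (\<lambda>x. f1 i x * g1 i x))"
    unfolding lap by (simp add: Bochner_Integration.integral_sum[OF swap(1)] swap(3) sum_negf)
qed

lemma schwartz_has_pderiv:
  assumes "schwartz f"
  shows "has_pderiv i (\<lambda>x. Re (pd_iter is f x)) (\<lambda>x. Re (pd_iter (i # is) f x))"
  unfolding has_pderiv_def
proof
  fix x
  have "(\<lambda>t. pd_iter is f (x + t *\<^sub>R axis i 1)) differentiable (at 0)"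
    using assms unfolding schwartz_def by blast
  then have "((\<lambda>t. pd_iter is f (x + t *\<^sub>R axis i 1)) has_vector_derivative pd_iter (i # is) f x) (at 0)"
    by (simp add: pdiff_def vector_derivative_works)
  then show "((\<lambda>t. Re (pd_iter is f (x + t *\<^sub>R axis i 1))) has_real_derivative Re (pd_iter (i # is) f x)) (at 0)"
    by (rule has_field_derivative_Re)
qed

lemma schwartz_continuous_on_Re: "schwartz f \<Longrightarrow> continuous_on UNIV (\<lambda>x. Re (pd_iter is f x))"
  unfolding schwartz_def by (auto intro: continuous_intros)

lemma schwartz_bracket_bounded:
  fixes f :: "real^'n::finite \<Rightarrow> complex"
  assumes "schwartz f"
  shows "bracket_bounded (- real N) (\<lambda>x. Re (pd_iter is f x))"
proof -
  obtain B where B: "\<And>x. norm (((1 + norm x) ^ (2 * N)) *\<^sub>R pd_iter is f x) \<le> B"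
    using assms unfolding schwartz_def bounded_iff by blast
  have "\<bar>Re (pd_iter is f x)\<bar> \<le> B * bracket (- real N) x" for x
  proof -
    have "1 + (norm x)\<^sup>2 \<le> (1 + norm x)\<^sup>2" by (simp add: power2_eq_square algebra_simps)
    then have "(1 + (norm x)\<^sup>2) ^ N \<le> (1 + norm x) ^ (2 * N)"
      by (simp add: power_mult power_mono)
    then have "(1 + (norm x)\<^sup>2) ^ N * cmod (pd_iter is f x) \<le> B"
      using B[of x] by (simp add: order_trans[OF mult_right_mono])
    then have "cmod (pd_iter is f x) \<le> B / (1 + (norm x)\<^sup>2) ^ N"
      using one_plus_norm_square_pos[of x] by (simp add: field_simps)
    moreover have "bracket (- real N) x = 1 / (1 + (norm x)\<^sup>2) ^ N"
      unfolding bracket_def using one_plus_norm_square_pos[of x]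
      by (simp add: powr_minus powr_realpow divide_inverse)
    ultimately show ?thesis using abs_Re_le_cmod[of "pd_iter is f x"] by simp
  qed
  then show ?thesis by (rule bracket_boundedI)
qed

definition dbracket :: "real \<Rightarrow> 'n::finite \<Rightarrow> real^'n \<Rightarrow> real" where
  "dbracket q i x = 2 * q * (x $ i * bracket (q - 1) x)"

definition ddbracket :: "real \<Rightarrow> 'n::finite \<Rightarrow> real^'n \<Rightarrow> real" where
  "ddbracket q i x = 2 * q * (bracket (q - 1) x + 2 * (q - 1) * (x $ i * (x $ i * bracket (q - 2) x)))"

lemma norm_square_mult_bracket: "(norm x)\<^sup>2 * bracket (q - 1) x = bracket q x - bracket (q - 1) x"
  using bracket_succ[of "q - 1" x] by (simp add: algebra_simps)

lemma sum_component_square: "(\<Sum>i\<in>UNIV. x $ i * x $ i) = (norm x)\<^sup>2"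
  for x :: "real^'n::finite"
  unfolding power2_norm_eq_inner inner_vec_def by simp

lemma has_pderiv_bracket:
  fixes i :: "'n::finite"
  shows "has_pderiv i (bracket q) (dbracket q i)"
  unfolding has_pderiv_def
proof
  fix x :: "real^'n"
  have norm_line: "(norm (x + t *\<^sub>R axis i 1))\<^sup>2 = (norm x)\<^sup>2 + 2 * t * x $ i + t\<^sup>2" for t
    unfolding power2_norm_eq_inner
    by (simp add: inner_add_left inner_add_right inner_commute inner_axis power2_eq_square algebra_simps)
  have "((\<lambda>t. (1 + ((norm x)\<^sup>2 + 2 * t * x $ i + t\<^sup>2)) powr q) has_real_derivative
      q * (1 + ((norm x)\<^sup>2 + 2 * 0 * x $ i + 0\<^sup>2)) powr (q - 1) * (2 * x $ i)) (at 0)"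
    using one_plus_norm_square_pos[of x] by (auto intro!: derivative_eq_intros)
  then show "((\<lambda>t. bracket q (x + t *\<^sub>R axis i 1)) has_real_derivative dbracket q i x) (at 0)"
    unfolding bracket_def dbracket_def norm_line by (simp add: algebra_simps)
qed

lemma has_pderiv_dbracket: "has_pderiv i (dbracket q i) (ddbracket q i)"
proof -
  have "has_pderiv i (\<lambda>x. 2 * q * (x $ i * bracket (q - 1) x))
      (\<lambda>x. 2 * q * (1 * bracket (q - 1) x + x $ i * dbracket (q - 1) i x))"
    by (intro has_pderiv_cmult has_pderiv_mult has_pderiv_component has_pderiv_bracket)
  then show ?thesis
    by (rule has_pderiv_cong) (simp_all add: dbracket_def ddbracket_def fun_eq_iff algebra_simps)
qed

lemma continuous_on_dbracket [continuous_intros]: "continuous_on A (dbracket q i)"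
  unfolding dbracket_def by (intro continuous_intros)

lemma continuous_on_ddbracket [continuous_intros]: "continuous_on A (ddbracket q i)"
  unfolding ddbracket_def by (intro continuous_intros)

lemma bracket_bounded_dbracket: "bracket_bounded (q - 1/2) (dbracket q i)"
proof -
  have "bracket_bounded (1/2 + (q - 1)) (\<lambda>x. 2 * q * (x $ i * bracket (q - 1) x))"
    by (intro bracket_bounded_cmult bracket_bounded_mult bracket_bounded_component bracket_bounded_bracket)
  then show ?thesis unfolding dbracket_def[abs_def] by simp
qed

lemma bracket_bounded_ddbracket: "bracket_bounded (q - 1) (ddbracket q i)"
proof -
  have "bracket_bounded (1/2 + (1/2 + (q - 2))) (\<lambda>x. x $ i * (x $ i * bracket (q - 2) x))"
    by (intro bracket_bounded_mult bracket_bounded_component bracket_bounded_bracket)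
  then have "bracket_bounded (q - 1) (\<lambda>x. 2 * q * (bracket (q - 1) x
      + 2 * (q - 1) * (x $ i * (x $ i * bracket (q - 2) x))))"
    by (intro bracket_bounded_cmult bracket_bounded_add bracket_bounded_bracket) simp
  then show ?thesis unfolding ddbracket_def[abs_def] .
qed

lemma sum_component_mult_dbracket:
  "(\<Sum>i\<in>UNIV. x $ i * dbracket q i x) = 2 * q * (bracket q x - bracket (q - 1) x)"
proof -
  have "(\<Sum>i\<in>UNIV. x $ i * dbracket q i x) = 2 * q * ((\<Sum>i\<in>UNIV. x $ i * x $ i) * bracket (q - 1) x)"
    unfolding dbracket_def by (simp add: sum_distrib_left sum_distrib_right mult_ac)
  then show ?thesis by (simp add: sum_component_square norm_square_mult_bracket)
qed

lemma lap_bracket: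
  "lap (bracket q) x = 2 * q * (real CARD('n) * bracket (q - 1) x
     + 2 * (q - 1) * (bracket (q - 1) x - bracket (q - 2) x))"
  for x :: "real^'n::finite"
proof -
  have "lap (bracket q) x = (\<Sum>i\<in>UNIV. ddbracket q i x)"
    by (rule lap_eq_sum[OF has_pderiv_bracket has_pderiv_dbracket])
  also have "\<dots> = (\<Sum>i\<in>UNIV. 2 * q * bracket (q - 1) x + (4 * q * (q - 1) * bracket (q - 2) x) * (x $ i * x $ i))"
    unfolding ddbracket_def by (simp add: algebra_simps)
  also have "\<dots> = real CARD('n) * (2 * q * bracket (q - 1) x)
      + (4 * q * (q - 1) * bracket (q - 2) x) * (\<Sum>i\<in>UNIV. x $ i * x $ i)"
    by (simp add: sum.distrib sum_distrib_left)
  also have "(\<Sum>i\<in>UNIV. x $ i * x $ i) = (norm x)\<^sup>2" by (rule sum_component_square)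
  also have "(4 * q * (q - 1) * bracket (q - 2) x) * (norm x)\<^sup>2
      = 4 * q * (q - 1) * (bracket (q - 1) x - bracket (q - 2) x)"
    using norm_square_mult_bracket[of x "q - 1"] by (simp add: mult_ac)
  finally show ?thesis by (simp add: algebra_simps)
qed

section \<open>Complex-valued lifts and the Hartree term\<close>

text \<open>A Bochner integral of a non-integrable function is \<open>0\<close>, so the hypothesis that the
  potential \<open>conv4 (\<lambda>z. (w z)\<^sup>2)\<close> vanishes nowhere is what makes the defining integrals finite.\<close>

lemma integrable_hartree_kernel:
  fixes w y :: "real^'n::finite \<Rightarrow> real"
  assumes cont: "continuous_on UNIV w" "continuous_on UNIV y"
    and w_bd: "\<And>x. \<bar>w x\<bar> \<le> A" and y_bd: "bracket_bounded q y" and q: "q < - real CARD('n) / 2"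
    and V_ne: "\<And>x. conv4 (\<lambda>z. (w z)\<^sup>2) x \<noteq> 0" and V_bd: "\<And>x. conv4 (\<lambda>z. (w z)\<^sup>2) x \<le> M"
  shows "integrable (lborel \<Otimes>\<^sub>M lborel) (\<lambda>(a, b). w a * y a * ((w b)\<^sup>2 / norm (a - b) ^ 4))"
proof -
  let ?V = "conv4 (\<lambda>z. (w z)\<^sup>2)"
  have [measurable]: "w \<in> borel_measurable borel" "y \<in> borel_measurable borel"
    using cont by (simp_all add: borel_measurable_continuous_onI)
  define F where "F a b = w a * y a * ((w b)\<^sup>2 / norm (a - b) ^ 4)" for a b :: "real^'n"
  have F_meas [measurable]: "case_prod F \<in> borel_measurable (lborel \<Otimes>\<^sub>M lborel)"
    unfolding F_def by measurable
  have V_int: "integrable lborel (\<lambda>b. (w b)\<^sup>2 / norm (a - b) ^ 4)" for a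
    using V_ne[of a] not_integrable_integral_eq unfolding conv4_def by blast
  have V_nonneg: "?V a \<ge> 0" for a
    unfolding conv4_def by (rule Bochner_Integration.integral_nonneg) simp
  have inner_norm: "(\<integral>b. norm (F a b) \<partial>lborel) = \<bar>w a * y a\<bar> * ?V a" for a
  proof -
    have "(\<lambda>b. norm (F a b)) = (\<lambda>b. \<bar>w a * y a\<bar> * ((w b)\<^sup>2 / norm (a - b) ^ 4))"
      unfolding F_def by (simp add: abs_mult)
    then show ?thesis unfolding conv4_def by (simp only: integral_mult_right_zero)
  qed
  obtain B where B: "\<And>x. \<bar>y x\<bar> \<le> B * bracket q x"
    using bracket_boundedD[OF y_bd] by blast
  have "A \<ge> 0" using w_bd[of 0] by linarith
  have bound: "\<bar>w a * y a\<bar> * ?V a \<le> (A * B * M) * bracket q a" for a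
  proof -
    have "\<bar>w a * y a\<bar> * ?V a \<le> (A * (B * bracket q a)) * M"
      unfolding abs_mult using V_nonneg[of a] V_bd[of a] w_bd[of a] B[of a] \<open>A \<ge> 0\<close>
      by (intro mult_mono) auto
    then show ?thesis by (simp add: mult_ac)
  qed
  have "integrable lborel (\<lambda>a. \<integral>b. norm (F a b) \<partial>lborel)"
  proof (rule Bochner_Integration.integrable_bound)
    show "integrable lborel (\<lambda>a::real^'n. (A * B * M) * bracket q a)"
      using integrable_bracket[OF q] by simp
    show "AE a in lborel. norm (\<integral>b. norm (F a b) \<partial>lborel) \<le> norm ((A * B * M) * bracket q a)"
      unfolding inner_norm using bound V_nonneg by (auto intro: order_trans[OF _ abs_ge_self])
  qed measurable
  moreover have "AE a in lborel. integrable lborel (\<lambda>b. F a b)"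
    unfolding F_def using V_int by (intro AE_I2 integrable_mult_right) simp
  ultimately show ?thesis
    unfolding F_def[abs_def, symmetric] by (intro lborel_pair.Fubini_integrable[OF F_meas]) simp_all
qed

lemma integral_conv4_mult_swap:
  fixes w y :: "real^'n::finite \<Rightarrow> real"
  assumes "continuous_on UNIV w" "continuous_on UNIV y"
    and "\<And>x. \<bar>w x\<bar> \<le> A" and "bracket_bounded q y" and "q < - real CARD('n) / 2"
    and "\<And>x. conv4 (\<lambda>z. (w z)\<^sup>2) x \<noteq> 0" and "\<And>x. conv4 (\<lambda>z. (w z)\<^sup>2) x \<le> M"
  shows "integrable lborel (\<lambda>x. conv4 (\<lambda>z. w z * y z) x * w x * w x)"
    and "integral\<^sup>L lborel (\<lambda>x. conv4 (\<lambda>z. w z * y z) x * w x * w x)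
       = integral\<^sup>L lborel (\<lambda>x. w x * y x * conv4 (\<lambda>z. (w z)\<^sup>2) x)"
proof -
  let ?F = "\<lambda>a b. w a * y a * ((w b)\<^sup>2 / norm (a - b) ^ 4)"
  note F_int = integrable_hartree_kernel[OF assms]
  have inner_fst: "(\<integral>b. ?F a b \<partial>lborel) = w a * y a * conv4 (\<lambda>z. (w z)\<^sup>2) a" for a
    unfolding conv4_def by (rule integral_mult_right_zero)
  have inner_snd: "(\<integral>a. ?F a b \<partial>lborel) = conv4 (\<lambda>z. w z * y z) b * w b * w b" for b
  proof -
    have "(\<lambda>a. ?F a b) = (\<lambda>a. w a * y a / norm (b - a) ^ 4 * (w b * w b))"
      by (simp add: norm_minus_commute power2_eq_square)
    then show ?thesis unfolding conv4_def by (simp only: integral_mult_left_zero mult.assoc)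
  qed
  show "integrable lborel (\<lambda>x. conv4 (\<lambda>z. w z * y z) x * w x * w x)"
    using lborel_pair.integrable_snd[OF F_int] unfolding inner_snd .
  show "integral\<^sup>L lborel (\<lambda>x. conv4 (\<lambda>z. w z * y z) x * w x * w x)
      = integral\<^sup>L lborel (\<lambda>x. w x * y x * conv4 (\<lambda>z. (w z)\<^sup>2) x)"
    using lborel_pair.Fubini_integral[OF F_int] unfolding inner_fst inner_snd .
qed

lemma integral_lborel_pos:
  fixes f :: "'a::euclidean_space \<Rightarrow> real"
  assumes "integrable lborel f" and "\<And>x. 0 < f x"
  shows "0 < integral\<^sup>L lborel f"
proof -
  have "integral\<^sup>L lborel f \<noteq> 0"
  proof
    assume "integral\<^sup>L lborel f = 0"
    then have "AE x in lborel. f x = 0"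
      using integral_nonneg_eq_0_iff_AE[OF assms(1)] assms(2) by (simp add: less_imp_le)
    then have "AE x in (lborel :: 'a measure). False" using assms(2) by (auto elim: AE_mp simp: less_le)
    then have "ae_filter (lborel :: 'a measure) = bot" by (simp add: trivial_limit_def)
    then show False by (simp add: ae_filter_eq_bot_iff)
  qed
  moreover have "0 \<le> integral\<^sup>L lborel f"
    using assms(2) by (simp add: Bochner_Integration.integral_nonneg less_imp_le)
  ultimately show ?thesis by simp
qed

lemma has_vector_derivative_scaled_of_real:
  assumes "has_pderiv i f f'"
  shows "((\<lambda>t. c * complex_of_real (f (x + t *\<^sub>R axis i 1))) has_vector_derivative c * of_real (f' x)) (at 0)"
  using assms unfolding has_pderiv_def
  by (metis bounded_linear.has_vector_derivative[OF bounded_linear_mult_right] has_vector_derivative_of_real)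

lemma pdiff_scaled_of_real:
  assumes "has_pderiv i f f'"
  shows "pdiff i (\<lambda>x. c * complex_of_real (f x)) x = c * of_real (f' x)"
  unfolding pdiff_def using has_vector_derivative_scaled_of_real[OF assms] by (rule vector_derivative_at)

lemma pdiff_of_real:
  "has_pderiv i f f' \<Longrightarrow> pdiff i (\<lambda>x. complex_of_real (f x)) x = of_real (f' x)"
  using pdiff_scaled_of_real[of i f f' 1] by simp

lemma hdot_inner_scaled_of_real:
  assumes "\<And>i. has_pderiv i f (f1 i)" and "\<And>i. has_pderiv i g (g1 i)"
  shows "hdot_inner (\<lambda>x. c * complex_of_real (f x)) (\<lambda>x. complex_of_real (g x))
       = Re (c * of_real (\<Sum>i\<in>UNIV. integral\<^sup>L lborel (\<lambda>x. f1 i x * g1 i x)))"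
  unfolding hdot_inner_def pdiff_scaled_of_real[OF assms(1)] pdiff_of_real[OF assms(2)]
  by (simp add: mult.assoc sum_distrib_left of_real_mult[symmetric] del: of_real_mult)

lemma hdot_inner_of_real:
  assumes "\<And>i. has_pderiv i f (f1 i)" and "\<And>i. has_pderiv i g (g1 i)"
  shows "hdot_inner (\<lambda>x. complex_of_real (f x)) (\<lambda>x. complex_of_real (g x))
       = (\<Sum>i\<in>UNIV. integral\<^sup>L lborel (\<lambda>x. f1 i x * g1 i x))"
  using hdot_inner_scaled_of_real[OF assms, of 1] by simp

lemma hdot_norm2_of_real:
  assumes "\<And>i. has_pderiv i f (f1 i)"
  shows "hdot_norm2 (\<lambda>x. complex_of_real (f x)) = (\<Sum>i\<in>UNIV. integral\<^sup>L lborel (\<lambda>x. (f1 i x)\<^sup>2))"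
  unfolding hdot_norm2_def pdiff_of_real[OF assms] by simp

lemma Phi_of_real_self:
  fixes W :: "real^'n::finite \<Rightarrow> real"
  shows "Phi W (\<lambda>x. complex_of_real (W x))
     = (\<Sum>i\<in>UNIV. integral\<^sup>L lborel (\<lambda>x. (pdiff i W x)\<^sup>2)) / 2
       - 3 / 2 * integral\<^sup>L lborel (\<lambda>x. conv4 (\<lambda>y. (W y)\<^sup>2) x * (W x)\<^sup>2)"
proof -
  have "pdiff i (\<lambda>x. 0 :: real) x = 0" for i :: 'n and x
    by (simp add: pdiff_def)
  moreover have "conv4 (\<lambda>y. W y * W y) x * W x * W x = conv4 (\<lambda>y. (W y)\<^sup>2) x * (W x)\<^sup>2" for x
    by (simp add: power2_eq_square)
  ultimately show ?thesis unfolding Phi_def Let_def by (simp add: diff_divide_distrib)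
qed

lemma Bform_of_real:
  "Bform W Y (\<lambda>x. complex_of_real (f x))
     = integral\<^sup>L lborel (\<lambda>x. Lplus W (\<lambda>y. Re (Y y)) x * f x) / 2"
  unfolding Bform_def by simp

section \<open>The ground state\<close>

context
  fixes W :: "real^'n::finite \<Rightarrow> real" and c p :: real
  assumes c_pos: "c > 0" and dim: "CARD('n) \<ge> 5"
    and p_def: "p = - (real CARD('n) - 2) / 2"
    and W_def: "W = (\<lambda>x. c * bracket p x)"
    and W_eq: "\<And>x. - lap W x = conv4 (\<lambda>y. (W y)\<^sup>2) x * W x"
begin

lemma bubble_exponents: "real CARD('n) = 2 - 2 * p" "p \<le> -3/2"
  using dim by (simp_all add: p_def field_simps)

lemma has_pderiv_W: "has_pderiv i W (\<lambda>x. c * dbracket p i x)"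
  unfolding W_def by (intro has_pderiv_cmult has_pderiv_bracket)

lemma has_pderiv_grad_W: "has_pderiv i (\<lambda>x. c * dbracket p i x) (\<lambda>x. c * ddbracket p i x)"
  by (intro has_pderiv_cmult has_pderiv_dbracket)

lemma pdiff_W: "pdiff i W = (\<lambda>x. c * dbracket p i x)"
  by (rule has_pderiv_imp_pdiff_eq[OF has_pderiv_W])

lemma continuous_on_W: "continuous_on UNIV W"
    "continuous_on UNIV (\<lambda>x. c * dbracket p i x)" "continuous_on UNIV (\<lambda>x. c * ddbracket p i x)"
  unfolding W_def by (intro continuous_intros)+

lemma bracket_bounded_W: "bracket_bounded p W"
    "bracket_bounded (p - 1/2) (\<lambda>x. c * dbracket p i x)" "bracket_bounded (p - 1) (\<lambda>x. c * ddbracket p i x)"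
  unfolding W_def
  by (intro bracket_bounded_cmult bracket_bounded_dbracket bracket_bounded_ddbracket bracket_bounded_bracket)+

lemma lap_W: "lap W x = - 4 * p * (p - 1) * c * bracket (p - 2) x"
proof -
  have "lap W x = c * (\<Sum>i\<in>UNIV. ddbracket p i x)"
    using lap_eq_sum[OF has_pderiv_W has_pderiv_grad_W] by (simp add: sum_distrib_left)
  also have "(\<Sum>i\<in>UNIV. ddbracket p i x) = lap (bracket p) x"
    by (rule lap_eq_sum[OF has_pderiv_bracket has_pderiv_dbracket, symmetric])
  finally show ?thesis
    unfolding lap_bracket bubble_exponents(1) by (simp add: algebra_simps)
qed

lemma potential_W: "conv4 (\<lambda>y. (W y)\<^sup>2) x = 4 * p * (p - 1) * bracket (-2) x"
proof -
  have "conv4 (\<lambda>y. (W y)\<^sup>2) x * (c * bracket p x) = (4 * p * (p - 1) * bracket (-2) x) * (c * bracket p x)"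
  proof -
    have "bracket (p - 2) x = bracket (-2) x * bracket p x"
      by (simp add: bracket_mult algebra_simps)
    then show ?thesis using W_eq[of x] unfolding lap_W by (simp add: W_def mult_ac) metis
  qed
  then show ?thesis using c_pos bracket_pos[of p x] by simp
qed

lemma integral_lap_W_mult_W:
  "integral\<^sup>L lborel (\<lambda>x. lap W x * W x)
     = - (\<Sum>i\<in>UNIV. integral\<^sup>L lborel (\<lambda>x::real^'n. (c * dbracket p i x)\<^sup>2))"
    and integrable_square_grad_W: "integrable lborel (\<lambda>x::real^'n. (c * dbracket p i x)\<^sup>2)"
proof -
  have exps: "p - 1/2 + p < - real CARD('n) / 2" "p - 1 + p < - real CARD('n) / 2"
      "p - 1/2 + (p - 1/2) < - real CARD('n) / 2"
    using bubble_exponents by simp_all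
  note green = integral_lap_mult[OF has_pderiv_W has_pderiv_grad_W has_pderiv_W
      continuous_on_W(2,3,1,2) bracket_bounded_W(2,3,1,2) exps]
  show "integral\<^sup>L lborel (\<lambda>x. lap W x * W x)
      = - (\<Sum>i\<in>UNIV. integral\<^sup>L lborel (\<lambda>x::real^'n. (c * dbracket p i x)\<^sup>2))"
    using green(3) by (simp add: power2_eq_square)
  show "integrable lborel (\<lambda>x::real^'n. (c * dbracket p i x)\<^sup>2)"
    using green(2) by (simp add: power2_eq_square)
qed

lemma integral_potential_mult_square_W:
  "integral\<^sup>L lborel (\<lambda>x. conv4 (\<lambda>y. (W y)\<^sup>2) x * (W x)\<^sup>2)
     = (\<Sum>i\<in>UNIV. integral\<^sup>L lborel (\<lambda>x::real^'n. (c * dbracket p i x)\<^sup>2))"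
proof -
  have "conv4 (\<lambda>y. (W y)\<^sup>2) x * (W x)\<^sup>2 = - (lap W x * W x)" for x
  proof -
    have "conv4 (\<lambda>y. (W y)\<^sup>2) x * (W x)\<^sup>2 = (conv4 (\<lambda>y. (W y)\<^sup>2) x * W x) * W x"
      by (simp add: power2_eq_square)
    then show ?thesis by (simp add: W_eq[symmetric])
  qed
  then show ?thesis by (simp add: integral_lap_W_mult_W)
qed

lemma dirichlet_energy_W_pos: "0 < (\<Sum>i\<in>UNIV. integral\<^sup>L lborel (\<lambda>x::real^'n. (c * dbracket p i x)\<^sup>2))"
proof -
  let ?K = "4 * p * (p - 1) * c\<^sup>2"
  have integrand: "conv4 (\<lambda>y. (W y)\<^sup>2) x * (W x)\<^sup>2 = ?K * bracket (2 * p - 2) x" for x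
  proof -
    have "bracket (-2) x * (bracket p x * bracket p x) = bracket (2 * p - 2) x"
      by (simp add: bracket_mult algebra_simps)
    then have "4 * p * (p - 1) * bracket (-2) x * (W x)\<^sup>2 = ?K * bracket (2 * p - 2) x"
      by (simp add: W_def power2_eq_square mult_ac)
    then show ?thesis by (simp add: potential_W)
  qed
  have "integrable lborel (bracket (2 * p - 2) :: real^'n \<Rightarrow> real)"
    by (rule integrable_bracket) (use bubble_exponents in simp)
  moreover have "0 < ?K"
    using bubble_exponents(2) c_pos by (simp add: mult_neg_neg)
  ultimately have "0 < integral\<^sup>L lborel (\<lambda>x::real^'n. ?K * bracket (2 * p - 2) x)"
    by (intro integral_lborel_pos) (simp_all add: bracket_pos)
  then show ?thesis
    unfolding integral_potential_mult_square_W[symmetric] integrand .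
qed

lemma radial_W: "radial (\<lambda>x. complex_of_real (W x))"
  unfolding radial_def W_def bracket_def by simp

lemma in_Hdot1_W: "in_Hdot1 (\<lambda>x. complex_of_real (W x))"
  unfolding in_Hdot1_def
proof (intro conjI allI)
  fix i x
  show "(\<lambda>t. complex_of_real (W (x + t *\<^sub>R axis i 1))) differentiable (at 0)"
    using has_vector_derivative_scaled_of_real[OF has_pderiv_W, of 1] by (auto intro: differentiableI_vector)
next
  fix i
  show "continuous_on UNIV (pdiff i (\<lambda>x. complex_of_real (W x)))"
    unfolding pdiff_of_real[OF has_pderiv_W, abs_def] by (intro continuous_intros)
  show "integrable lborel (\<lambda>x. (cmod (pdiff i (\<lambda>x. complex_of_real (W x)) x))\<^sup>2)"
    unfolding pdiff_of_real[OF has_pderiv_W] using integrable_square_grad_W by (simp del: of_real_mult)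
next
  let ?e = "2 * real CARD('n) / (real CARD('n) - 2)"
  have "p * ?e = - real CARD('n)" using dim by (simp add: p_def field_simps)
  then have "cmod (complex_of_real (W x)) powr ?e = c powr ?e * bracket (- real CARD('n)) x" for x
  proof -
    have "cmod (complex_of_real (W x)) = c * bracket p x"
      unfolding norm_of_real W_def using c_pos bracket_pos[of p x] by simp
    then show ?thesis
      using c_pos bracket_pos[of p x] \<open>p * ?e = - real CARD('n)\<close>
      by (simp add: powr_mult bracket_def powr_powr)
  qed
  moreover have "integrable lborel (bracket (- real CARD('n)) :: real^'n \<Rightarrow> real)"
    by (rule integrable_bracket) simp
  ultimately show "integrable lborel (\<lambda>x. cmod (complex_of_real (W x)) powr ?e)" by simp
qed

lemma scaling_generator_W:
  "(real CARD('n) - 2) / 2 * W x + (\<Sum>i\<in>UNIV. x $ i * pdiff i W x)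
     = c * p * (bracket p x - 2 * bracket (p - 1) x)"
proof -
  have "(\<Sum>i\<in>UNIV. x $ i * pdiff i W x) = c * (\<Sum>i\<in>UNIV. x $ i * dbracket p i x)"
    unfolding pdiff_W by (simp add: sum_distrib_left mult_ac)
  also have "\<dots> = c * (2 * p * (bracket p x - bracket (p - 1) x))"
    by (simp add: sum_component_mult_dbracket)
  finally have sum: "(\<Sum>i\<in>UNIV. x $ i * pdiff i W x) = c * (2 * p * (bracket p x - bracket (p - 1) x))" .
  have d: "(real CARD('n) - 2) / 2 = - p" by (simp add: p_def field_simps)
  show ?thesis unfolding sum d by (simp add: W_def algebra_simps)
qed

text \<open>With \<open>G = |\<nabla>W|\<^sup>2 / 2 = 2 c\<^sup>2 p\<^sup>2 (bracket (2p - 1) - bracket (2p - 2))\<close>, the integrand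
  \<open>\<nabla>W\<^sub>1 \<cdot> \<nabla>W\<close> of the scaling generator \<open>W\<^sub>1 = c p (bracket p - 2 bracket (p - 1))\<close> is the
  divergence \<open>\<Sum>\<^sub>i \<partial>\<^sub>i (x\<^sub>i G)\<close>.\<close>

lemma scaling_divergence_identity:
  "(\<Sum>j\<in>UNIV. c * p * (dbracket p j x - 2 * dbracket (p - 1) j x) * (c * dbracket p j x))
   = (\<Sum>i\<in>UNIV. 2 * c\<^sup>2 * p\<^sup>2 * (bracket (2 * p - 1) x - bracket (2 * p - 2) x)
       + x $ i * (2 * c\<^sup>2 * p\<^sup>2 * (dbracket (2 * p - 1) i x - dbracket (2 * p - 2) i x)))"
  for x :: "real^'n"
proof -
  let ?A = "bracket (2 * p - 2) x" and ?B = "bracket (2 * p - 3) x" and ?s = "(norm x)\<^sup>2"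
  have AB: "bracket (p - 1) x * bracket (p - 1) x = ?A" "bracket (p - 2) x * bracket (p - 1) x = ?B"
    by (simp_all add: bracket_mult algebra_simps)
  have lhs: "c * p * (dbracket p j x - 2 * dbracket (p - 1) j x) * (c * dbracket p j x)
      = (x $ j * x $ j) * (2 * c\<^sup>2 * p\<^sup>2 * (2 * p * ?A - 4 * (p - 1) * ?B))" for j
    unfolding dbracket_def AB[symmetric] by (simp add: power2_eq_square algebra_simps)
  have rhs: "x $ i * (2 * c\<^sup>2 * p\<^sup>2 * (dbracket (2 * p - 1) i x - dbracket (2 * p - 2) i x))
      = (x $ i * x $ i) * (2 * c\<^sup>2 * p\<^sup>2 * (2 * (2 * p - 1) * ?A - 2 * (2 * p - 2) * ?B))" for i
    unfolding dbracket_def by (simp add: algebra_simps)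
  have G: "bracket (2 * p - 1) x = (1 + ?s) * ?A"
    using bracket_succ[of "2 * p - 2" x] by simp
  show ?thesis
    unfolding lhs rhs sum.distrib sum_distrib_right[symmetric] sum_component_square G
    by (simp add: bubble_exponents(1) algebra_simps)
qed

lemma hdot_inner_scaling_generator_W:
  "hdot_inner (\<lambda>x. complex_of_real ((real CARD('n) - 2) / 2 * W x + (\<Sum>i\<in>UNIV. x $ i * pdiff i W x)))
     (\<lambda>x. complex_of_real (W x)) = 0"
proof -
  let ?W1 = "\<lambda>j (x :: real^'n). c * p * (dbracket p j x - 2 * dbracket (p - 1) j x)"
  let ?G = "\<lambda>x :: real^'n. 2 * c\<^sup>2 * p\<^sup>2 * (bracket (2 * p - 1) x - bracket (2 * p - 2) x)"
  let ?G' = "\<lambda>i (x :: real^'n). 2 * c\<^sup>2 * p\<^sup>2 * (dbracket (2 * p - 1) i x - dbracket (2 * p - 2) i x)"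
  have W1: "has_pderiv j (\<lambda>x. c * p * (bracket p x - 2 * bracket (p - 1) x)) (?W1 j)" for j
    by (intro has_pderiv_cmult has_pderiv_diff has_pderiv_bracket)
  have "bracket_bounded (p - 1/2 + (p - 1/2)) (\<lambda>x. ?W1 j x * (c * dbracket p j x))" for j
    by (intro bracket_bounded_mult bracket_bounded_cmult bracket_bounded_diff bracket_bounded_dbracket
        bracket_bounded_mono[OF bracket_bounded_dbracket]) simp
  then have int: "integrable lborel (\<lambda>x::real^'n. ?W1 j x * (c * dbracket p j x))" for j
    by (rule integrable_bracket_bounded[rotated]) (use bubble_exponents in simp, intro continuous_intros)
  have G_bd: "bracket_bounded (2 * p - 1) ?G" "bracket_bounded (2 * p - 1 - 1/2) (?G' i)" for i
    by (intro bracket_bounded_cmult bracket_bounded_diff bracket_bounded_bracket bracket_bounded_dbracket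
        bracket_bounded_mono[OF bracket_bounded_bracket] bracket_bounded_mono[OF bracket_bounded_dbracket];
        simp)+
  note div = integral_pderiv_component_mult_eq_0[OF _ _ _ G_bd,
      OF has_pderiv_cmult[OF has_pderiv_diff[OF has_pderiv_bracket has_pderiv_bracket]]]
  have "hdot_inner (\<lambda>x. complex_of_real (c * p * (bracket p x - 2 * bracket (p - 1) x)))
      (\<lambda>x. complex_of_real (W x)) = (\<Sum>j\<in>UNIV. integral\<^sup>L lborel (\<lambda>x::real^'n. ?W1 j x * (c * dbracket p j x)))"
    by (rule hdot_inner_of_real[OF W1 has_pderiv_W])
  also have "\<dots> = integral\<^sup>L lborel (\<lambda>x::real^'n. \<Sum>i\<in>UNIV. ?G x + x $ i * ?G' i x)"
    by (simp add: Bochner_Integration.integral_sum[symmetric, OF int] scaling_divergence_identity)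
  also have "\<dots> = 0"
    using div bubble_exponents by (simp add: Bochner_Integration.integral_sum continuous_intros)
  finally show ?thesis unfolding scaling_generator_W .
qed

lemma integral_hartree_W:
  assumes "continuous_on UNIV y" and "bracket_bounded (- real CARD('n)) y"
  shows "integrable lborel (\<lambda>x. conv4 (\<lambda>z. W z * y z) x * W x * W x)"
    and "integral\<^sup>L lborel (\<lambda>x. conv4 (\<lambda>z. W z * y z) x * W x * W x)
       = - integral\<^sup>L lborel (\<lambda>x. lap W x * y x)"
proof -
  let ?V = "conv4 (\<lambda>y. (W y)\<^sup>2)"
  have "bracket p x \<le> 1" "bracket (-2) x \<le> 1" for x :: "real^'n"
    using bracket_mono[of p 0 x] bracket_mono[of "-2" 0 x] bubble_exponents by simp_all
  moreover have "0 \<le> 4 * p * (p - 1)"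
    using bubble_exponents(2) by (simp add: mult_nonpos_nonpos)
  ultimately have W_bd: "\<bar>W x\<bar> \<le> c" and V_bd: "?V x \<le> 4 * p * (p - 1)" for x
    using c_pos bracket_pos[of p x] unfolding potential_W
    by (simp_all add: W_def abs_mult mult_left_le)
  have V_ne: "?V x \<noteq> 0" for x
    using bracket_pos[of "-2" x] bubble_exponents by (simp add: potential_W)
  have "- real CARD('n) < - real CARD('n) / 2" by simp
  note fubini = integral_conv4_mult_swap[OF continuous_on_W(1) assms(1) W_bd assms(2) this V_ne V_bd]
  show "integrable lborel (\<lambda>x. conv4 (\<lambda>z. W z * y z) x * W x * W x)"
    by (rule fubini(1))
  have "W x * y x * ?V x = - lap W x * y x" for x
    unfolding W_eq by (simp add: mult_ac)
  then show "integral\<^sup>L lborel (\<lambda>x. conv4 (\<lambda>z. W z * y z) x * W x * W x)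
      = - integral\<^sup>L lborel (\<lambda>x. lap W x * y x)"
    using fubini(2) by simp
qed

lemma integral_Lplus_W_mult_W:
  assumes Y: "schwartz Y"
    and orth: "integral\<^sup>L lborel (\<lambda>x. \<Sum>i\<in>UNIV. pdiff i W x * pdiff i (\<lambda>y. Re (Y y)) x) = 0"
  shows "integral\<^sup>L lborel (\<lambda>x. Lplus W (\<lambda>y. Re (Y y)) x * W x) = 0"
proof -
  let ?Y = "\<lambda>y. Re (Y y)" and ?Y1 = "\<lambda>i x. Re (pdiff i Y x)" and ?Y2 = "\<lambda>i x. Re (pdiff i (pdiff i Y) x)"
  let ?V = "conv4 (\<lambda>y. (W y)\<^sup>2)" and ?C = "conv4 (\<lambda>y. W y * Re (Y y))"
  have Y1: "has_pderiv i ?Y (?Y1 i)" and Y2: "has_pderiv i (?Y1 i) (?Y2 i)" for i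
    using schwartz_has_pderiv[OF Y, of i "[]"] schwartz_has_pderiv[OF Y, of i "[i]"] by simp_all
  have Y_cont: "continuous_on UNIV ?Y" "continuous_on UNIV (?Y1 i)" "continuous_on UNIV (?Y2 i)" for i
    using schwartz_continuous_on_Re[OF Y, of "[]"] schwartz_continuous_on_Re[OF Y, of "[i]"]
      schwartz_continuous_on_Re[OF Y, of "[i, i]"] by simp_all
  have Y_bd: "bracket_bounded (- real CARD('n)) ?Y" "bracket_bounded (- real CARD('n)) (?Y1 i)"
      "bracket_bounded (- real CARD('n)) (?Y2 i)" for i
    using schwartz_bracket_bounded[OF Y, of "CARD('n)" "[]"] schwartz_bracket_bounded[OF Y, of "CARD('n)" "[i]"]
      schwartz_bracket_bounded[OF Y, of "CARD('n)" "[i, i]"] by simp_all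
  have exps: "- real CARD('n) + p < - real CARD('n) / 2" "- real CARD('n) + (p - 1/2) < - real CARD('n) / 2"
      "p - 1/2 + - real CARD('n) < - real CARD('n) / 2" "p - 1 + - real CARD('n) < - real CARD('n) / 2"
    using bubble_exponents by simp_all
  note green_YW = integral_lap_mult[OF Y1 Y2 has_pderiv_W Y_cont(2,3) continuous_on_W(1,2)
      Y_bd(2,3) bracket_bounded_W(1,2) exps(1,1,2)]
  note green_WY = integral_lap_mult[OF has_pderiv_W has_pderiv_grad_W Y1 continuous_on_W(2,3) Y_cont(1,2)
      bracket_bounded_W(2,3) Y_bd(1,2) exps(3,4,3)]
  have "(\<Sum>i\<in>UNIV. integral\<^sup>L lborel (\<lambda>x. c * dbracket p i x * ?Y1 i x)) = 0"
    using orth unfolding pdiff_W has_pderiv_imp_pdiff_eq[OF Y1]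
    by (simp add: Bochner_Integration.integral_sum[OF green_WY(2)])
  then have lap_Y_W: "integral\<^sup>L lborel (\<lambda>x. lap ?Y x * W x) = 0"
    and lap_W_Y: "integral\<^sup>L lborel (\<lambda>x. lap W x * ?Y x) = 0"
    unfolding green_YW(3) green_WY(3) by (simp_all add: mult.commute)
  note hartree = integral_hartree_W[OF Y_cont(1) Y_bd(1)]
  have "Lplus W ?Y x * W x = (lap W x * ?Y x - lap ?Y x * W x) - 2 * (?C x * W x * W x)" for x
  proof -
    have "Lplus W ?Y x * W x = - lap ?Y x * W x - ?V x * ?Y x * W x - 2 * (?C x * W x * W x)"
      by (simp add: Lplus_def algebra_simps)
    also have "?V x * ?Y x * W x = - lap W x * ?Y x"
      unfolding W_eq by (simp add: mult_ac)
    finally show ?thesis by simp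
  qed
  then show ?thesis
    using green_YW(1) green_WY(1) hartree(1)
    by (simp add: Bochner_Integration.integral_diff lap_Y_W lap_W_Y hartree(2))
qed

end

theorem corollary2p19:
  fixes W :: "real^'n::finite \<Rightarrow> real"
    and Yp Ym :: "real^'n \<Rightarrow> complex"
    and c0 e0 :: real
  assumes dim: "CARD('n) \<ge> 5"
    and c0_pos: "c0 > 0"
    and W_def: "\<And>x. W x = c0 * (1 + (norm x)\<^sup>2) powr (- (real CARD('n) - 2) / 2)"
    and W_eq: "\<And>x. - lap W x = conv4 (\<lambda>y. (W y)\<^sup>2) x * W x"
    and e0_pos: "e0 > 0"
    and Yp_schwartz: "schwartz Yp" and Ym_schwartz: "schwartz Ym"
    and Yp_radial: "radial Yp" and Ym_radial: "radial Ym"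
    and Yp_eig: "\<And>x. Lop W Yp x = e0 * Yp x"
    and Ym_eig: "\<And>x. Lop W Ym x = - e0 * Ym x"
    and Yp_conj: "\<And>x. Yp x = cnj (Ym x)"
    and coercive: "\<exists>c>0. \<forall>h. radial h \<and> in_Hdot1 h
        \<and> hdot_inner (\<lambda>x. \<i> * complex_of_real (W x)) h = 0
        \<and> hdot_inner (\<lambda>x. complex_of_real ((real CARD('n) - 2) / 2 * W x
                          + (\<Sum>i\<in>UNIV. x $ i * pdiff i W x))) h = 0
        \<and> Bform W Yp h = 0 \<and> Bform W Ym h = 0
        \<longrightarrow> Phi W h \<ge> c * hdot_norm2 h"
  shows "(\<integral>x. (\<Sum>i\<in>UNIV. pdiff i W x * pdiff i (\<lambda>y. Re (Yp y)) x) \<partial>lborel) \<noteq> 0"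
proof
  assume orth: "(\<integral>x. (\<Sum>i\<in>UNIV. pdiff i W x * pdiff i (\<lambda>y. Re (Yp y)) x) \<partial>lborel) = 0"
  define p where "p = - (real CARD('n) - 2) / 2"
  have W: "W = (\<lambda>x. c0 * bracket p x)"
    using W_def by (simp add: fun_eq_iff bracket_def p_def)
  note bubble = c0_pos dim p_def W W_eq
  let ?h = "\<lambda>x. complex_of_real (W x)"
  define E where "E = (\<Sum>i\<in>UNIV. integral\<^sup>L lborel (\<lambda>x::real^'n. (c0 * dbracket p i x)\<^sup>2))"
  have Re_Ym: "(\<lambda>y. Re (Ym y)) = (\<lambda>y. Re (Yp y))"
    by (simp add: Yp_conj)
  have "hdot_inner (\<lambda>x. \<i> * complex_of_real (W x)) ?h = 0"
    using hdot_inner_scaled_of_real[OF has_pderiv_W[OF bubble] has_pderiv_W[OF bubble]] by simp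
  moreover have "Bform W Yp ?h = 0" and "Bform W Ym ?h = 0"
    using integral_Lplus_W_mult_W[OF bubble Yp_schwartz orth] Re_Ym by (simp_all add: Bform_of_real)
  ultimately obtain c where "c > 0" and "Phi W ?h \<ge> c * hdot_norm2 ?h"
    using coercive radial_W[OF bubble] in_Hdot1_W[OF bubble] hdot_inner_scaling_generator_W[OF bubble]
    by blast
  moreover have "Phi W ?h = - E"
    using integral_potential_mult_square_W[OF bubble]
    by (simp add: Phi_of_real_self pdiff_W[OF bubble] E_def)
  moreover have "hdot_norm2 ?h = E"
    unfolding E_def by (rule hdot_norm2_of_real[OF has_pderiv_W[OF bubble]])
  ultimately have "c * E \<le> - E" by simp
  moreover have "E > 0"
    unfolding E_def by (rule dirichlet_energy_W_pos[OF bubble])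
  ultimately show False
    using mult_pos_pos[OF \<open>c > 0\<close>] by fastforce
qed

end
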